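(* Let $\Delta:A\to A$ be a weak-2-local derivation on a unital C$^*$-algebra $A$. Then for each projection $p\in A$, each $a\in A$ and each $\lambda\in\mathbb{C}$, $\Delta(a+\lambda p)=\Delta(a-\lambda(1-p))$.
   Context: A derivation on $A$ is a linear map $D:A\to A$ with $D(ab)=D(a)b+aD(b)$. A (not necessarily linear) map $\Delta:A\to A$ is a weak-2-local derivation if for every $a,b\in A$ and every $\phi\in A^*$ there exists a derivation $D_{a,b,\phi}:A\to A$ such that $\phi\Delta(a)=\phi D_{a,b,\phi}(a)$ and $\phi\Delta(b)=\phi D_{a,b,\phi}(b)$. *)

theory Defs
  imports "HOL-Analysis.Analysis"
begin

text \<open>The complex scalar multiplication is a class parameter; it is required to
  extend the real scalar multiplication of the underlying real Banach algebra.\<close>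

class complex_banach_algebra_1 = real_normed_algebra_1 + banach +
  fixes scaleC :: "complex \<Rightarrow> 'a \<Rightarrow> 'a" (infixr \<open>*\<^sub>C\<close> 75)
  assumes scaleC_add_right: "c *\<^sub>C (x + y) = c *\<^sub>C x + c *\<^sub>C y"
    and scaleC_add_left: "(c + d) *\<^sub>C x = c *\<^sub>C x + d *\<^sub>C x"
    and scaleC_scaleC: "c *\<^sub>C (d *\<^sub>C x) = (c * d) *\<^sub>C x"
    and scaleC_one: "1 *\<^sub>C x = x"
    and scaleR_scaleC: "r *\<^sub>R x = complex_of_real r *\<^sub>C x"
    and norm_scaleC: "norm (c *\<^sub>C x) = cmod c * norm x"
    and mult_scaleC_left: "(c *\<^sub>C x) * y = c *\<^sub>C (x * y)"
    and mult_scaleC_right: "x * (c *\<^sub>C y) = c *\<^sub>C (x * y)"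

class unital_cstar_algebra = complex_banach_algebra_1 +
  fixes cstar :: "'a \<Rightarrow> 'a"
  assumes cstar_cstar: "cstar (cstar x) = x"
    and cstar_add: "cstar (x + y) = cstar x + cstar y"
    and cstar_scaleC: "cstar (c *\<^sub>C x) = cnj c *\<^sub>C cstar x"
    and cstar_mult: "cstar (x * y) = cstar y * cstar x"
    and cstar_identity: "norm (cstar x * x) = (norm x)\<^sup>2"

definition is_projection :: "'a::unital_cstar_algebra \<Rightarrow> bool" where
  "is_projection p \<longleftrightarrow> p * p = p \<and> cstar p = p"

definition clinear_map :: "('a::complex_banach_algebra_1 \<Rightarrow> 'b::complex_banach_algebra_1) \<Rightarrow> bool" where
  "clinear_map f \<longleftrightarrow> (\<forall>x y. f (x + y) = f x + f y) \<and> (\<forall>c x. f (c *\<^sub>C x) = c *\<^sub>C f x)"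

definition derivation :: "('a::complex_banach_algebra_1 \<Rightarrow> 'a) \<Rightarrow> bool" where
  "derivation D \<longleftrightarrow> clinear_map D \<and> (\<forall>a b. D (a * b) = D a * b + a * D b)"

definition cdual :: "('a::complex_banach_algebra_1 \<Rightarrow> complex) set" where
  "cdual = {\<phi>. (\<forall>x y. \<phi> (x + y) = \<phi> x + \<phi> y) \<and> (\<forall>c x. \<phi> (c *\<^sub>C x) = c * \<phi> x)
              \<and> (\<exists>K. \<forall>x. cmod (\<phi> x) \<le> K * norm x)}"

definition weak_2_local_derivation :: "('a::complex_banach_algebra_1 \<Rightarrow> 'a) \<Rightarrow> bool" where
  "weak_2_local_derivation \<Delta> \<longleftrightarrow>
     (\<forall>a b. \<forall>\<phi>\<in>cdual. \<exists>D. derivation D \<and> \<phi> (\<Delta> a) = \<phi> (D a) \<and> \<phi> (\<Delta> b) = \<phi> (D b))"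

end

theory Submission
  imports Defs
begin

text \<open>A derivation kills the unit, so it takes the same value at \<open>a + \<mu> p\<close> and at
  \<open>a - \<mu> (1 - p) = (a + \<mu> p) - \<mu> 1\<close> (whether or not \<open>p\<close> is a projection). For a
  weak-2-local derivation \<open>\<Delta>\<close> and any bounded functional \<open>\<phi>\<close>, a single derivation matches
  \<open>\<phi> \<circ> \<Delta>\<close> at both points, so \<open>\<phi>\<close> does not distinguish the two values of \<open>\<Delta>\<close>. Bounded
  functionals separate points by Hahn-Banach (Zorn's lemma on graphs of norm-dominated partial
  real functionals, followed by complexification), so the two values coincide.\<close>

definition norm_bounded_linear_graph :: "('a::real_normed_vector \<times> real) set \<Rightarrow> bool" where
  "norm_bounded_linear_graph G \<longleftrightarrow> (0, 0) \<in> G \<and> single_valued G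
     \<and> (\<forall>x a y b. (x, a) \<in> G \<longrightarrow> (y, b) \<in> G \<longrightarrow> (x + y, a + b) \<in> G)
     \<and> (\<forall>x a r. (x, a) \<in> G \<longrightarrow> (r *\<^sub>R x, r * a) \<in> G)
     \<and> (\<forall>x a. (x, a) \<in> G \<longrightarrow> a \<le> norm x)"

lemma norm_bounded_linear_graphD:
  assumes "norm_bounded_linear_graph G"
  shows "(0, 0) \<in> G"
    and "(x, a) \<in> G \<Longrightarrow> (x, b) \<in> G \<Longrightarrow> a = b"
    and "(x, a) \<in> G \<Longrightarrow> (y, b) \<in> G \<Longrightarrow> (x + y, a + b) \<in> G"
    and "(x, a) \<in> G \<Longrightarrow> (r *\<^sub>R x, r * a) \<in> G"
    and "(x, a) \<in> G \<Longrightarrow> a \<le> norm x"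
  using assms unfolding norm_bounded_linear_graph_def single_valued_def by blast+

lemma norm_bounded_linear_graph_line:
  fixes z :: "'a::real_normed_vector"
  assumes "z \<noteq> 0"
  shows "norm_bounded_linear_graph (range (\<lambda>t. (t *\<^sub>R z, t * norm z)))"
    (is "norm_bounded_linear_graph ?L")
  unfolding norm_bounded_linear_graph_def single_valued_def
proof (intro conjI allI impI)
  show "(0, 0) \<in> ?L"
    by (rule range_eqI[of _ _ 0]) simp
  show "(x + y, a + b) \<in> ?L" if mem: "(x, a) \<in> ?L" "(y, b) \<in> ?L" for x a y b
  proof -
    obtain t s where "x = t *\<^sub>R z" "a = t * norm z" "y = s *\<^sub>R z" "b = s * norm z"
      using mem by blast
    then show ?thesis
      by (intro range_eqI[of _ _ "t + s"]) (simp add: scaleR_add_left distrib_right)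
  qed
  show "(r *\<^sub>R x, r * a) \<in> ?L" if mem: "(x, a) \<in> ?L" for x a r
  proof -
    obtain t where "x = t *\<^sub>R z" "a = t * norm z"
      using mem by blast
    then show ?thesis
      by (intro range_eqI[of _ _ "r * t"]) simp
  qed
  show "a \<le> norm x" if "(x, a) \<in> ?L" for x a
    using that by (force intro: mult_right_mono abs_ge_self)
  show "a = b" if "(x, a) \<in> ?L" "(x, b) \<in> ?L" for x a b
    using that assms by (auto simp: scaleR_cancel_right)
qed

lemma norm_bounded_linear_graph_Union_chain:
  assumes "C \<noteq> {}" "subset.chain {G. norm_bounded_linear_graph G} C"
  shows "norm_bounded_linear_graph (\<Union>C)"
proof -
  have graph: "norm_bounded_linear_graph G" if "G \<in> C" for G
    using assms(2) that unfolding subset_chain_def by blast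
  have common: "\<exists>G\<in>C. u \<in> G \<and> v \<in> G" if "u \<in> \<Union>C" "v \<in> \<Union>C" for u v
    using assms(2) that unfolding subset_chain_def by blast
  show ?thesis
    unfolding norm_bounded_linear_graph_def single_valued_def
  proof (intro conjI allI impI)
    show "(0, 0) \<in> \<Union>C"
      using assms(1) graph norm_bounded_linear_graphD(1) by blast
    show "a = b" if "(x, a) \<in> \<Union>C" "(x, b) \<in> \<Union>C" for x a b
      using common[OF that] graph norm_bounded_linear_graphD(2) by blast
    show "(x + y, a + b) \<in> \<Union>C" if "(x, a) \<in> \<Union>C" "(y, b) \<in> \<Union>C" for x a y b
      using common[OF that] graph norm_bounded_linear_graphD(3) by blast
    show "(r *\<^sub>R x, r * a) \<in> \<Union>C" if "(x, a) \<in> \<Union>C" for x a r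
      using that graph norm_bounded_linear_graphD(4) by blast
    show "a \<le> norm x" if "(x, a) \<in> \<Union>C" for x a
      using that graph norm_bounded_linear_graphD(5) by blast
  qed
qed

text \<open>The classical one-dimensional step of Hahn-Banach: \<open>c\<close> is squeezed between
  \<open>a - \<parallel>s - x\<^sub>0\<parallel>\<close> and \<open>\<parallel>s' + x\<^sub>0\<parallel> - a'\<close>, which is possible because \<open>a + a' \<le> \<parallel>s + s'\<parallel>\<close>.\<close>

lemma norm_bounded_linear_graph_extension_value:
  assumes G: "norm_bounded_linear_graph G"
  obtains c where "\<And>s a t. (s, a) \<in> G \<Longrightarrow> a + t * c \<le> norm (s + t *\<^sub>R x\<^sub>0)"
proof -
  note graph = norm_bounded_linear_graphD[OF G]
  define c where "c = Sup {a - norm (s - x\<^sub>0) | s a. (s, a) \<in> G}"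
  have squeeze: "a - norm (s - x\<^sub>0) \<le> norm (s' + x\<^sub>0) - a'" if "(s, a) \<in> G" "(s', a') \<in> G"
    for s a s' a'
  proof -
    have "a + a' \<le> norm ((s - x\<^sub>0) + (s' + x\<^sub>0))"
      using graph(5)[OF graph(3)[OF that]] by (simp add: algebra_simps)
    also have "\<dots> \<le> norm (s - x\<^sub>0) + norm (s' + x\<^sub>0)"
      by (rule norm_triangle_ineq)
    finally show ?thesis by simp
  qed
  have c_lower: "a - norm (s - x\<^sub>0) \<le> c" if "(s, a) \<in> G" for s a
    unfolding c_def using that squeeze[OF _ graph(1)]
    by (intro cSup_upper) (auto simp: bdd_above_def)
  have c_upper: "c \<le> norm (s + x\<^sub>0) - a" if "(s, a) \<in> G" for s a
    unfolding c_def using squeeze[OF _ that] graph(1) by (intro cSup_least) auto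
  have "a + t * c \<le> norm (s + t *\<^sub>R x\<^sub>0)" if "(s, a) \<in> G" for s a t
  proof (cases t "0::real" rule: linorder_cases)
    case less
    have rescale: "(- t) *\<^sub>R ((- 1 / t) *\<^sub>R s - x\<^sub>0) = s + t *\<^sub>R x\<^sub>0"
      using less by (simp add: algebra_simps)
    have "t * c \<le> t * ((- 1 / t) * a - norm ((- 1 / t) *\<^sub>R s - x\<^sub>0))"
      using c_lower[OF graph(4)[OF that, of "- 1 / t"]] less by (intro mult_left_mono_neg) auto
    then have "a + t * c \<le> a + t * ((- 1 / t) * a - norm ((- 1 / t) *\<^sub>R s - x\<^sub>0))"
      by simp
    also have "\<dots> = (- t) * norm ((- 1 / t) *\<^sub>R s - x\<^sub>0)"
      using less by (simp add: algebra_simps)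
    also have "\<dots> = norm (s + t *\<^sub>R x\<^sub>0)"
      using less by (simp flip: rescale)
    finally show ?thesis .
  next
    case equal
    then show ?thesis using graph(5)[OF that] by simp
  next
    case greater
    have rescale: "t *\<^sub>R ((1 / t) *\<^sub>R s + x\<^sub>0) = s + t *\<^sub>R x\<^sub>0"
      using greater by (simp add: scaleR_add_right)
    have "t * c \<le> t * (norm ((1 / t) *\<^sub>R s + x\<^sub>0) - (1 / t) * a)"
      using c_upper[OF graph(4)[OF that, of "1 / t"]] greater by (intro mult_left_mono) auto
    then have "a + t * c \<le> t * norm ((1 / t) *\<^sub>R s + x\<^sub>0)"
      using greater by (simp add: algebra_simps)
    also have "\<dots> = norm (s + t *\<^sub>R x\<^sub>0)"
      using greater by (simp flip: rescale)
    finally show ?thesis .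
  qed
  then show thesis by (rule that)
qed

lemma norm_bounded_linear_graph_unique_decomposition:
  assumes G: "norm_bounded_linear_graph G" and x\<^sub>0: "x\<^sub>0 \<notin> Domain G"
    and "(s, a) \<in> G" "(s', a') \<in> G" and eq: "s + t *\<^sub>R x\<^sub>0 = s' + t' *\<^sub>R x\<^sub>0"
  shows "t = t' \<and> s = s'"
proof (rule ccontr)
  note graph = norm_bounded_linear_graphD[OF G]
  assume "\<not> (t = t' \<and> s = s')"
  with eq have "t \<noteq> t'" by auto
  have "x\<^sub>0 = (1 / (t - t')) *\<^sub>R ((t - t') *\<^sub>R x\<^sub>0)"
    using \<open>t \<noteq> t'\<close> by simp
  also have "(t - t') *\<^sub>R x\<^sub>0 = s' + (- 1) *\<^sub>R s"
    using eq by (simp add: algebra_simps)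
  finally have "x\<^sub>0 = (1 / (t - t')) *\<^sub>R (s' + (- 1) *\<^sub>R s)" .
  moreover have "((1 / (t - t')) *\<^sub>R (s' + (- 1) *\<^sub>R s), (1 / (t - t')) * (a' + (- 1) * a)) \<in> G"
    by (intro graph(3,4) assms(3,4))
  ultimately show False
    using x\<^sub>0 by (metis Domain.DomainI)
qed

lemma norm_bounded_linear_graph_extend:
  assumes G: "norm_bounded_linear_graph G" and x\<^sub>0: "x\<^sub>0 \<notin> Domain G"
  shows "\<exists>G'. norm_bounded_linear_graph G' \<and> G \<subset> G'"
proof -
  note graph = norm_bounded_linear_graphD[OF G]
  obtain c where c: "\<And>s a t. (s, a) \<in> G \<Longrightarrow> a + t * c \<le> norm (s + t *\<^sub>R x\<^sub>0)"
    using norm_bounded_linear_graph_extension_value[OF G] by blast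
  define G' where "G' = {(s + t *\<^sub>R x\<^sub>0, a + t * c) | s a t. (s, a) \<in> G}"
  have "norm_bounded_linear_graph G'"
    unfolding norm_bounded_linear_graph_def single_valued_def
  proof (intro conjI allI impI)
    show "(0, 0) \<in> G'"
      unfolding G'_def using graph(1) by force
    show "a = b" if "(x, a) \<in> G'" "(x, b) \<in> G'" for x a b
      using that norm_bounded_linear_graph_unique_decomposition[OF G x\<^sub>0] graph(2)
      unfolding G'_def by blast
    show "(x + y, a + b) \<in> G'" if mem: "(x, a) \<in> G'" "(y, b) \<in> G'" for x a y b
    proof -
      obtain s a\<^sub>1 t s' b\<^sub>1 t' where in_G: "(s, a\<^sub>1) \<in> G" "(s', b\<^sub>1) \<in> G"
        and "x = s + t *\<^sub>R x\<^sub>0" "a = a\<^sub>1 + t * c" "y = s' + t' *\<^sub>R x\<^sub>0" "b = b\<^sub>1 + t' * c"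
        using mem unfolding G'_def by blast
      then have "(x + y, a + b) = ((s + s') + (t + t') *\<^sub>R x\<^sub>0, (a\<^sub>1 + b\<^sub>1) + (t + t') * c)"
        by (simp add: algebra_simps)
      then show ?thesis
        unfolding G'_def using graph(3)[OF in_G] by blast
    qed
    show "(r *\<^sub>R x, r * a) \<in> G'" if mem: "(x, a) \<in> G'" for x a r
    proof -
      obtain s a\<^sub>1 t where in_G: "(s, a\<^sub>1) \<in> G" and "x = s + t *\<^sub>R x\<^sub>0" "a = a\<^sub>1 + t * c"
        using mem unfolding G'_def by blast
      then have "(r *\<^sub>R x, r * a) = (r *\<^sub>R s + (r * t) *\<^sub>R x\<^sub>0, r * a\<^sub>1 + (r * t) * c)"
        by (simp add: algebra_simps)
      then show ?thesis
        unfolding G'_def using graph(4)[OF in_G] by blast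
    qed
    show "a \<le> norm x" if "(x, a) \<in> G'" for x a
      using that c unfolding G'_def by blast
  qed
  moreover have "G \<subseteq> G'"
    unfolding G'_def by (force intro: exI[of _ 0])
  moreover have "(x\<^sub>0, c) \<in> G'"
    unfolding G'_def using graph(1) by (force intro: exI[of _ 1])
  ultimately show ?thesis
    using x\<^sub>0 by blast
qed

lemma norming_real_functional:
  fixes z :: "'a::real_normed_vector"
  obtains f where "\<And>x y. f (x + y) = f x + f y" "\<And>r x. f (r *\<^sub>R x) = r * f x"
    "\<And>x. \<bar>f x\<bar> \<le> norm x" "f z = norm z"
proof (cases "z = 0")
  case True
  then show thesis by (intro that[of "\<lambda>_. 0"]) simp_all
next
  case False
  let ?\<G> = "{G. norm_bounded_linear_graph G \<and> (z, norm z) \<in> G}"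
  have "\<exists>M\<in>?\<G>. \<forall>G\<in>?\<G>. M \<subseteq> G \<longrightarrow> G = M"
  proof (rule subset_Zorn_nonempty)
    show "?\<G> \<noteq> {}"
      using norm_bounded_linear_graph_line[OF False] by (force intro: range_eqI[of _ _ 1])
    show "\<Union>C \<in> ?\<G>" if "C \<noteq> {}" "subset.chain ?\<G> C" for C
      using that norm_bounded_linear_graph_Union_chain[OF that(1)]
      unfolding subset_chain_def by blast
  qed
  then obtain M where M: "norm_bounded_linear_graph M" "(z, norm z) \<in> M"
    and maximal: "\<And>G. norm_bounded_linear_graph G \<Longrightarrow> M \<subseteq> G \<Longrightarrow> G = M"
    by blast
  note graph = norm_bounded_linear_graphD[OF M(1)]
  have "x \<in> Domain M" for x
    using norm_bounded_linear_graph_extend[OF M(1), of x] maximal M(2) by blast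
  then have in_M: "(x, THE a. (x, a) \<in> M) \<in> M" for x
    by (metis DomainE graph(2) theI)
  have eq: "(THE a. (x, a) \<in> M) = a" if "(x, a) \<in> M" for x a
    using graph(2)[OF in_M that] .
  show thesis
  proof (rule that[of "\<lambda>x. THE a. (x, a) \<in> M"])
    show "(THE a. (x + y, a) \<in> M) = (THE a. (x, a) \<in> M) + (THE a. (y, a) \<in> M)" for x y
      using eq[OF graph(3)[OF in_M in_M]] .
    show "(THE a. (r *\<^sub>R x, a) \<in> M) = r * (THE a. (x, a) \<in> M)" for r x
      using eq[OF graph(4)[OF in_M]] .
    show "\<bar>THE a. (x, a) \<in> M\<bar> \<le> norm x" for x
      using graph(5)[OF in_M, of x] graph(5)[OF graph(4)[OF in_M[of x], of "- 1"]] by simp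
    show "(THE a. (z, a) \<in> M) = norm z"
      using eq[OF M(2)] .
  qed
qed

lemma scaleC_zero_right: "c *\<^sub>C (0::'a::complex_banach_algebra_1) = 0"
  using scaleC_add_right[of c 0 0] by simp

lemma scaleC_minus_one: "(- 1) *\<^sub>C (x::'a::complex_banach_algebra_1) = - x"
  using scaleR_scaleC[of "- 1" x] by simp

lemma scaleC_Re_Im: "c *\<^sub>C (x::'a::complex_banach_algebra_1) = Re c *\<^sub>R x + Im c *\<^sub>R (\<i> *\<^sub>C x)"
proof -
  have "c = complex_of_real (Re c) + complex_of_real (Im c) * \<i>"
    by (simp add: complex_eq_iff)
  then have "c *\<^sub>C x = complex_of_real (Re c) *\<^sub>C x + (complex_of_real (Im c) * \<i>) *\<^sub>C x"
    by (metis scaleC_add_left)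
  then show ?thesis
    by (simp add: scaleR_scaleC scaleC_scaleC)
qed

text \<open>Complexification: \<open>\<phi> x = f x - \<i> f (\<i> x)\<close>.\<close>

lemma cdual_separates_points:
  fixes z :: "'a::complex_banach_algebra_1"
  assumes "z \<noteq> 0"
  shows "\<exists>\<phi>\<in>cdual. \<phi> z \<noteq> 0"
proof -
  obtain f where f_add: "\<And>x y. f (x + y) = f x + f y" and f_scaleR: "\<And>r x. f (r *\<^sub>R x) = r * f x"
    and f_bound: "\<And>x. \<bar>f x\<bar> \<le> norm x" and f_z: "f z = norm z"
    using norming_real_functional[of z] by blast
  have f_scaleC: "f (c *\<^sub>C x) = Re c * f x + Im c * f (\<i> *\<^sub>C x)" for c x
    unfolding scaleC_Re_Im[of c x] by (simp add: f_add f_scaleR)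
  have f_ii: "f (\<i> *\<^sub>C (\<i> *\<^sub>C x)) = - f x" for x
  proof -
    have "\<i> *\<^sub>C (\<i> *\<^sub>C x) = (- 1) *\<^sub>R x"
      by (simp add: scaleC_scaleC scaleC_minus_one)
    then show ?thesis
      using f_scaleR[of "- 1" x] by simp
  qed
  define \<phi> where "\<phi> x = Complex (f x) (- f (\<i> *\<^sub>C x))" for x
  have "\<phi> \<in> cdual"
    unfolding cdual_def
  proof (intro CollectI conjI allI)
    show "\<phi> (x + y) = \<phi> x + \<phi> y" for x y
      unfolding \<phi>_def by (simp add: scaleC_add_right f_add complex_eq_iff)
    show "\<phi> (c *\<^sub>C x) = c * \<phi> x" for c x
    proof -
      have "\<i> *\<^sub>C (c *\<^sub>C x) = c *\<^sub>C (\<i> *\<^sub>C x)"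
        by (simp add: scaleC_scaleC mult.commute)
      then have "f (\<i> *\<^sub>C (c *\<^sub>C x)) = Re c * f (\<i> *\<^sub>C x) - Im c * f x"
        using f_scaleC[of c "\<i> *\<^sub>C x"] f_ii[of x] by simp
      then show ?thesis
        unfolding \<phi>_def using f_scaleC[of c x] by (simp add: complex_eq_iff algebra_simps)
    qed
    show "\<exists>K. \<forall>x. cmod (\<phi> x) \<le> K * norm x"
    proof (intro exI allI)
      fix x
      have "cmod (\<phi> x) \<le> \<bar>f x\<bar> + \<bar>f (\<i> *\<^sub>C x)\<bar>"
        using cmod_le[of "\<phi> x"] by (simp add: \<phi>_def)
      also have "\<dots> \<le> norm x + norm (\<i> *\<^sub>C x)"
        using f_bound by (intro add_mono)
      also have "\<dots> = 2 * norm x"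
        by (simp add: norm_scaleC)
      finally show "cmod (\<phi> x) \<le> 2 * norm x" .
    qed
  qed
  moreover have "\<phi> z \<noteq> 0"
    unfolding \<phi>_def using f_z assms by (simp add: complex_eq_iff)
  ultimately show ?thesis by blast
qed

lemma cdual_eqI:
  fixes x y :: "'a::complex_banach_algebra_1"
  assumes "\<And>\<phi>. \<phi> \<in> cdual \<Longrightarrow> \<phi> x = \<phi> y"
  shows "x = y"
proof (rule ccontr)
  assume "x \<noteq> y"
  then obtain \<phi> where \<phi>: "\<phi> \<in> cdual" "\<phi> (x - y) \<noteq> 0"
    using cdual_separates_points[of "x - y"] by auto
  have "\<phi> x = \<phi> (x - y) + \<phi> y"
    using \<phi>(1) unfolding cdual_def by (metis (mono_tags, lifting) diff_add_cancel mem_Collect_eq)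
  with \<phi> assms[OF \<phi>(1)] show False by simp
qed

lemma derivation_one:
  assumes "derivation D"
  shows "D 1 = 0"
proof -
  have "D (1 * 1) = D 1 * 1 + 1 * D 1"
    using assms unfolding derivation_def by blast
  then show ?thesis by simp
qed

lemma derivation_add_scaleC_one:
  assumes "derivation D"
  shows "D (x + c *\<^sub>C 1) = D x"
proof -
  have "D (x + c *\<^sub>C 1) = D x + c *\<^sub>C D 1"
    using assms unfolding derivation_def clinear_map_def by simp
  then show ?thesis
    by (simp add: derivation_one[OF assms] scaleC_zero_right)
qed

lemma weak_2_local_derivation_add_scaleC_one:
  fixes \<Delta> :: "'a::complex_banach_algebra_1 \<Rightarrow> 'a"
  assumes "weak_2_local_derivation \<Delta>"
  shows "\<Delta> (x + c *\<^sub>C 1) = \<Delta> x"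
proof (rule cdual_eqI)
  fix \<phi> :: "'a \<Rightarrow> complex"
  assume "\<phi> \<in> cdual"
  then obtain D where "derivation D"
    and "\<phi> (\<Delta> (x + c *\<^sub>C 1)) = \<phi> (D (x + c *\<^sub>C 1))" "\<phi> (\<Delta> x) = \<phi> (D x)"
    using assms unfolding weak_2_local_derivation_def by blast
  then show "\<phi> (\<Delta> (x + c *\<^sub>C 1)) = \<phi> (\<Delta> x)"
    by (simp add: derivation_add_scaleC_one)
qed

theorem lemma2p3:
  fixes \<Delta> :: "'a::unital_cstar_algebra \<Rightarrow> 'a" and p a :: 'a and \<mu> :: complex
  assumes "weak_2_local_derivation \<Delta>"
    and "is_projection p"
  shows "\<Delta> (a + \<mu> *\<^sub>C p) = \<Delta> (a - \<mu> *\<^sub>C (1 - p))"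
proof -
  have "\<mu> *\<^sub>C (1::'a) = \<mu> *\<^sub>C (1 - p) + \<mu> *\<^sub>C p"
    using scaleC_add_right[of \<mu> "1 - p" p] by simp
  then have "a + \<mu> *\<^sub>C p = (a - \<mu> *\<^sub>C (1 - p)) + \<mu> *\<^sub>C 1"
    by (simp add: algebra_simps)
  then have "\<Delta> (a + \<mu> *\<^sub>C p) = \<Delta> ((a - \<mu> *\<^sub>C (1 - p)) + \<mu> *\<^sub>C 1)"
    by (rule arg_cong)
  also have "\<dots> = \<Delta> (a - \<mu> *\<^sub>C (1 - p))"
    by (rule weak_2_local_derivation_add_scaleC_one[OF assms(1)])
  finally show ?thesis .
qed

end
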